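(* Assume that $M=S^1$ and $N$ is a compact Riemannian manifold. If $\gamma$ is a geodesic and the spinor $\psi$ is of the form $\psi=\partial_s\cdot\chi\otimes\gamma'$ with $\chi$ a harmonic spinor (i.e. $\partial\!\!\!/\,\chi=0$), then the pair $(\gamma,\psi)$ is a Dirac-geodesic, i.e. $\tau(\gamma)=\mathcal{R}(\gamma,\psi)$ and $D\!\!\!/\,\psi=0$.
   Context: $\gamma\colon S^1\to N$, $\psi$ a section of $\Sigma S^1\otimes\gamma^{-1}TN$, $\partial\!\!\!/=i\nabla$ the untwisted Dirac operator on $\Sigma S^1$, $D\!\!\!/$ the twisted Dirac operator on $\Sigma S^1\otimes\gamma^{-1}TN$, $\tau(\gamma)$ the tension field, $\mathcal{R}(\gamma,\psi)=\frac12R^N(\partial_s\cdot\psi,\psi)\gamma'$ with $R^N$ the curvature of $N$ and $\cdot$ Clifford multiplication (multiplication by $i$ on $S^1$). Dirac-geodesics are critical points of $E(\gamma,\psi)=\frac12\int_{S^1}(|\gamma'|^2+\langle\psi,D\!\!\!/\,\psi\rangle)ds$. *)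

theory Defs
  imports "HOL-Analysis.Analysis"
begin

text \<open>
Extrinsic model: the compact Riemannian manifold N is a compact smooth embedded
submanifold of a Euclidean space 'e with the induced metric (every compact
Riemannian manifold arises this way up to isometry, by Nash).  The domain
S^1 is the circle of length 2 pi, i.e. all sections are functions of s in the
reals with the appropriate 2 pi periodicity.
\<close>

fun Ck_on :: "nat \<Rightarrow> 'a::real_normed_vector set \<Rightarrow> ('a \<Rightarrow> 'b::real_normed_vector) \<Rightarrow> bool" where
  "Ck_on 0 U f = continuous_on U f"
| "Ck_on (Suc k) U f =
     (f differentiable_on U \<and> (\<forall>v. Ck_on k U (\<lambda>x. frechet_derivative f (at x) v)))"

definition smooth_on :: "'a::real_normed_vector set \<Rightarrow> ('a \<Rightarrow> 'b::real_normed_vector) \<Rightarrow> bool" where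
  "smooth_on U f \<longleftrightarrow> (\<forall>k. Ck_on k U f)"

definition smooth_submanifold :: "'e::euclidean_space set \<Rightarrow> bool" where
  "smooth_submanifold N \<longleftrightarrow>
     (\<forall>p\<in>N. \<exists>U (F::'e \<Rightarrow> 'e) r. open U \<and> p \<in> U \<and> smooth_on U F \<and>
        N \<inter> U = {x\<in>U. F x = 0} \<and>
        (\<forall>x\<in>U. dim (range (frechet_derivative F (at x))) = r))"

definition tangent_space :: "'e::euclidean_space set \<Rightarrow> 'e \<Rightarrow> 'e set" where
  "tangent_space N p =
     {v. \<exists>c::real \<Rightarrow> 'e. (\<forall>t. c t \<in> N) \<and> c 0 = p \<and> (c has_vector_derivative v) (at 0)}"

definition tangent_proj :: "'e::euclidean_space set \<Rightarrow> 'e \<Rightarrow> 'e \<Rightarrow> 'e" where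
  "tangent_proj N p v = closest_point (tangent_space N p) v"

text \<open>Shape operator A_X = dP_p(X); for tangent X, Y one has A_X Y = II(X,Y).\<close>
definition shape_op :: "'e::euclidean_space set \<Rightarrow> 'e \<Rightarrow> 'e \<Rightarrow> 'e \<Rightarrow> 'e" where
  "shape_op N p X v = frechet_derivative (\<lambda>q. tangent_proj N q v) (at p within N) X"

text \<open>Riemann curvature of N (Gauss equation):
  R(X,Y)Z = P (A_X A_Y Z - A_Y A_X Z), convention
  R(X,Y) = nabla_X nabla_Y - nabla_Y nabla_X - nabla_[X,Y].\<close>
definition curvature :: "'e::euclidean_space set \<Rightarrow> 'e \<Rightarrow> 'e \<Rightarrow> 'e \<Rightarrow> 'e \<Rightarrow> 'e" where
  "curvature N p X Y Z =
     tangent_proj N p (shape_op N p X (shape_op N p Y Z) - shape_op N p Y (shape_op N p X Z))"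

definition onb :: "'e::euclidean_space set \<Rightarrow> 'e set" where
  "onb T = (SOME B. B \<subseteq> T \<and> pairwise orthogonal B \<and> (\<forall>x\<in>B. norm x = 1) \<and> span B = T)"

text \<open>Spinors on S^1: Sigma S^1 is the trivial complex line bundle, spinors are
complex functions; Clifford multiplication by d/ds is multiplication by i.
An element of Sigma S^1 (x) gamma^{-1} TN at s is represented by a pair
(u, w) of tangent vectors at gamma s, standing for 1 (x) u + i (x) w.\<close>

definition tensor :: "complex \<Rightarrow> 'e::real_vector \<Rightarrow> 'e \<times> 'e" where
  "tensor z v = (Re z *\<^sub>R v, Im z *\<^sub>R v)"

text \<open>Clifford multiplication by d/ds (multiplication by i) on the twisted bundle.\<close>
definition cliff :: "'e::real_vector \<times> 'e \<Rightarrow> 'e \<times> 'e" where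
  "cliff x = (- snd x, fst x)"

definition cov_deriv :: "'e::euclidean_space set \<Rightarrow> (real \<Rightarrow> 'e) \<Rightarrow> (real \<Rightarrow> 'e) \<Rightarrow> real \<Rightarrow> 'e" where
  "cov_deriv N \<gamma> V s = tangent_proj N (\<gamma> s) (vector_derivative V (at s))"

definition twisted_dirac ::
  "'e::euclidean_space set \<Rightarrow> (real \<Rightarrow> 'e) \<Rightarrow> (real \<Rightarrow> 'e \<times> 'e) \<Rightarrow> real \<Rightarrow> 'e \<times> 'e" where
  "twisted_dirac N \<gamma> \<psi> s =
     cliff (cov_deriv N \<gamma> (\<lambda>t. fst (\<psi> t)) s, cov_deriv N \<gamma> (\<lambda>t. snd (\<psi> t)) s)"

definition untwisted_dirac :: "(real \<Rightarrow> complex) \<Rightarrow> real \<Rightarrow> complex" where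
  "untwisted_dirac chi s = \<i> * vector_derivative chi (at s)"

definition tension :: "'e::euclidean_space set \<Rightarrow> (real \<Rightarrow> 'e) \<Rightarrow> real \<Rightarrow> 'e" where
  "tension N \<gamma> s =
     tangent_proj N (\<gamma> s) (vector_derivative (\<lambda>t. vector_derivative \<gamma> (at t)) (at s))"

text \<open>R(gamma,psi) = 1/2 R^N(d/ds . psi, psi) gamma', i.e. with psi = sum_b psi^b (x) b
over an orthonormal basis b of T_{gamma s} N:
  1/2 sum_{b,b'} <d/ds . psi^b, psi^b'> R^N(b,b') gamma',
<z,z'> = Re (z * cnj z') the real inner product on spinors.\<close>
definition curv_term ::
  "'e::euclidean_space set \<Rightarrow> (real \<Rightarrow> 'e) \<Rightarrow> (real \<Rightarrow> 'e \<times> 'e) \<Rightarrow> real \<Rightarrow> 'e" where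
  "curv_term N \<gamma> \<psi> s =
     (let B = onb (tangent_space N (\<gamma> s));
          c = (\<lambda>b. Complex (fst (\<psi> s) \<bullet> b) (snd (\<psi> s) \<bullet> b))
      in (1/2) *\<^sub>R (\<Sum>b\<in>B. \<Sum>b'\<in>B.
            Re ((\<i> * c b) * cnj (c b')) *\<^sub>R
              curvature N (\<gamma> s) b b' (vector_derivative \<gamma> (at s))))"

end

theory Submission imports Defs begin

text \<open>A harmonic spinor on the circle has vanishing derivative, hence is constant, so
  \<open>\<psi> = tensor z \<gamma>'\<close> for a fixed \<open>z\<close>. Its curvature term vanishes because all coefficient
  spinors of \<open>\<psi>\<close> are real multiples of \<open>z\<close> and \<open>\<langle>i w, w\<rangle> = 0\<close>. The twisted Dirac operator
  of \<open>\<psi>\<close> is built from the tangential parts of real multiples of \<open>\<gamma>''\<close>, which vanish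
  because \<open>\<gamma>\<close> is a geodesic: the tangent space is a cone, and projecting onto a cone commutes
  with scaling whenever the projection of the vector is zero.\<close>

definition nearest :: "'a::metric_space set \<Rightarrow> 'a \<Rightarrow> 'a \<Rightarrow> bool" where
  "nearest T u y \<longleftrightarrow> y \<in> T \<and> (\<forall>x\<in>T. dist u y \<le> dist u x)"

lemma closest_point_eq_Eps_nearest:
  fixes T :: "'a::{heine_borel,real_inner} set"
  shows "closest_point T u = (SOME y. nearest T u y)"
  unfolding closest_point_def nearest_def by simp

lemma inner_eq_0_if_norm_minimal_on_line:
  fixes v x :: "'a::real_inner"
  assumes "\<And>t. norm v \<le> norm (v - t *\<^sub>R x)"
  shows "v \<bullet> x = 0"
proof (cases "x = 0")
  case False
  define t where "t = (v \<bullet> x) / (x \<bullet> x)"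
  have xx: "x \<bullet> x > 0" using False by simp
  have "norm v ^ 2 \<le> norm (v - t *\<^sub>R x) ^ 2" using assms by (simp add: power_mono)
  also have "\<dots> = v \<bullet> v - 2 * t * (v \<bullet> x) + t^2 * (x \<bullet> x)"
    by (simp only: power2_norm_eq_inner)
      (simp add: inner_diff_left inner_diff_right inner_commute algebra_simps power2_eq_square)
  also have "\<dots> = v \<bullet> v - (v \<bullet> x)^2 / (x \<bullet> x)"
    using xx unfolding t_def by (simp add: field_simps power2_eq_square)
  finally have "(v \<bullet> x)^2 / (x \<bullet> x) \<le> 0" by (simp add: power2_norm_eq_inner)
  then show ?thesis using xx by (simp add: divide_le_0_iff)
qed simp

lemma nearest_cone_scaleR_iff:
  fixes T :: "'a::real_normed_vector set"
  assumes cone: "\<And>x t. x \<in> T \<Longrightarrow> t *\<^sub>R x \<in> T" and "a \<noteq> 0"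
  shows "nearest T (a *\<^sub>R v) y \<longleftrightarrow> nearest T v (y /\<^sub>R a)"
proof -
  have dist_eq: "dist (a *\<^sub>R v) x = \<bar>a\<bar> * dist v (x /\<^sub>R a)" for x
  proof -
    have "a *\<^sub>R v - x = a *\<^sub>R (v - x /\<^sub>R a)" using \<open>a \<noteq> 0\<close> by (simp add: algebra_simps)
    then show ?thesis by (simp add: dist_norm)
  qed
  have in_T: "x /\<^sub>R a \<in> T \<longleftrightarrow> x \<in> T" for x
    using cone[of x "inverse a"] cone[of "x /\<^sub>R a" a] \<open>a \<noteq> 0\<close> by auto
  have "(\<forall>x\<in>T. dist v (y /\<^sub>R a) \<le> dist v (x /\<^sub>R a)) \<longleftrightarrow> (\<forall>x\<in>T. dist v (y /\<^sub>R a) \<le> dist v x)"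
  proof
    assume le: "\<forall>x\<in>T. dist v (y /\<^sub>R a) \<le> dist v (x /\<^sub>R a)"
    show "\<forall>x\<in>T. dist v (y /\<^sub>R a) \<le> dist v x"
    proof
      fix x assume "x \<in> T"
      then have "a *\<^sub>R x \<in> T" by (rule cone)
      with le \<open>a \<noteq> 0\<close> show "dist v (y /\<^sub>R a) \<le> dist v x" by fastforce
    qed
  qed (use in_T in blast)
  then show ?thesis
    unfolding nearest_def dist_eq using in_T \<open>a \<noteq> 0\<close> by simp
qed

text \<open>Without convexity or closedness of \<open>T\<close>, nearest points need not exist, and then
  \<open>closest_point\<close> is an unspecified choice; the proof therefore shows that the nearest-point
  predicates of \<open>v\<close> and \<open>a v\<close> coincide.\<close>
lemma closest_point_cone_scaleR_eq_0:
  fixes T :: "'a::{heine_borel,real_inner} set"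
  assumes cone: "\<And>x t. x \<in> T \<Longrightarrow> t *\<^sub>R x \<in> T" and "0 \<in> T"
    and cp: "closest_point T v = 0"
  shows "closest_point T (a *\<^sub>R v) = 0"
proof (cases "a = 0")
  case True
  have "nearest T 0 y \<longleftrightarrow> y = 0" for y
    using \<open>0 \<in> T\<close> unfolding nearest_def by auto
  then show ?thesis using True by (simp add: closest_point_eq_Eps_nearest)
next
  case False
  have only_zero: "y = 0" if "nearest T v y" for y
  proof -
    have "nearest T v 0"
      using someI[of "nearest T v", OF that] cp by (simp add: closest_point_eq_Eps_nearest)
    then have orth: "v \<bullet> x = 0" if "x \<in> T" for x
      using cone[OF that] unfolding nearest_def
      by (intro inner_eq_0_if_norm_minimal_on_line) (simp add: dist_norm)
    have "norm (v - y) ^ 2 = norm v ^ 2 + norm y ^ 2"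
      using orth[of y] that unfolding nearest_def
      by (simp only: power2_norm_eq_inner) (simp add: inner_diff_left inner_diff_right inner_commute)
    moreover have "norm (v - y) \<le> norm v"
      using that \<open>0 \<in> T\<close> unfolding nearest_def dist_norm by (metis diff_zero)
    ultimately have "norm y ^ 2 \<le> 0"
      using power_mono[of "norm (v - y)" "norm v" 2] by simp
    then show "y = 0" by simp
  qed
  have "nearest T (a *\<^sub>R v) = nearest T v"
  proof
    fix y
    have "nearest T (a *\<^sub>R v) y \<longleftrightarrow> nearest T v (y /\<^sub>R a)"
      using nearest_cone_scaleR_iff[OF cone False] by blast
    also have "\<dots> \<longleftrightarrow> nearest T v y"
    proof
      assume near: "nearest T v (y /\<^sub>R a)"
      then have "y /\<^sub>R a = 0" by (rule only_zero)
      with near False show "nearest T v y" by simp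
    next
      assume near: "nearest T v y"
      then have "y = 0" by (rule only_zero)
      with near show "nearest T v (y /\<^sub>R a)" by simp
    qed
    finally show "nearest T (a *\<^sub>R v) y = nearest T v y" .
  qed
  then show ?thesis using cp by (simp add: closest_point_eq_Eps_nearest)
qed

lemma scaleR_in_tangent_space:
  assumes "x \<in> tangent_space N p"
  shows "t *\<^sub>R x \<in> tangent_space N p"
proof -
  obtain c where c: "\<forall>t. c t \<in> N" "c 0 = p" "(c has_vector_derivative x) (at 0)"
    using assms unfolding tangent_space_def by blast
  have "((\<lambda>s. t * s) has_vector_derivative t) (at 0)"
    by (auto intro!: derivative_eq_intros simp flip: has_real_derivative_iff_has_vector_derivative)
  from vector_diff_chain_at[OF this] c(3)
  have "((\<lambda>s. c (t * s)) has_vector_derivative t *\<^sub>R x) (at 0)" by (simp add: o_def)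
  then show ?thesis unfolding tangent_space_def
    using c by (intro CollectI exI[of _ "\<lambda>s. c (t * s)"]) auto
qed

lemma zero_in_tangent_space: "p \<in> N \<Longrightarrow> 0 \<in> tangent_space N p"
  unfolding tangent_space_def by (auto intro!: exI[of _ "\<lambda>_. p"])

lemma smooth_on_UNIV_differentiable:
  "smooth_on UNIV f \<Longrightarrow> f differentiable at x"
  unfolding smooth_on_def
  by (metis Ck_on.simps(2) differentiable_on_def iso_tuple_UNIV_I at_within_open open_UNIV)

lemma frechet_derivative_1_eq_vector_derivative:
  fixes f :: "real \<Rightarrow> 'b::real_normed_vector"
  assumes "f differentiable at x"
  shows "frechet_derivative f (at x) 1 = vector_derivative f (at x)"
proof -
  have "(f has_derivative frechet_derivative f (at x)) (at x)"
    using assms frechet_derivative_works by blast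
  moreover have "(f has_derivative (\<lambda>h. h *\<^sub>R vector_derivative f (at x))) (at x)"
    using assms vector_derivative_works has_vector_derivative_def by blast
  ultimately have "frechet_derivative f (at x) = (\<lambda>h. h *\<^sub>R vector_derivative f (at x))"
    by (rule has_derivative_unique)
  then show ?thesis by simp
qed

lemma smooth_on_UNIV_vector_derivative_differentiable:
  fixes f :: "real \<Rightarrow> 'b::real_normed_vector"
  assumes "smooth_on UNIV f"
  shows "(\<lambda>t. vector_derivative f (at t)) differentiable at x"
proof -
  have "Ck_on 2 UNIV f" using assms unfolding smooth_on_def by blast
  then have "(\<lambda>x. frechet_derivative f (at x) 1) differentiable at x"
    by (simp add: numeral_2_eq_2 differentiable_on_def)
  moreover have "(\<lambda>x. frechet_derivative f (at x) 1) = (\<lambda>t. vector_derivative f (at t))"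
    using frechet_derivative_1_eq_vector_derivative smooth_on_UNIV_differentiable[OF assms]
    by auto
  ultimately show ?thesis by simp
qed

lemma harmonic_spinor_constant:
  assumes "\<And>s. chi differentiable at s" and "\<And>s. untwisted_dirac chi s = 0"
  obtains c where "\<And>s. chi s = c"
proof -
  have deriv_0: "(chi has_vector_derivative 0) (at s within UNIV)" for s
  proof -
    have "vector_derivative chi (at s) = 0"
      using assms(2)[of s] by (simp add: untwisted_dirac_def)
    with vector_derivative_works[of chi "at s"] assms(1)[of s] show ?thesis by simp
  qed
  obtain c where "\<And>s. s \<in> UNIV \<Longrightarrow> chi s = c"
    using has_vector_derivative_zero_constant[OF convex_UNIV deriv_0] by metis
  with that show ?thesis by simp
qed

lemma curv_term_tensor_eq_0:
  "curv_term N \<gamma> (\<lambda>t. tensor (z t) (V t)) s = 0"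
  unfolding curv_term_def tensor_def Let_def by (simp add: algebra_simps)

lemma cov_deriv_scaleR_velocity_of_geodesic:
  assumes "\<gamma> s \<in> N" "tension N \<gamma> s = 0"
    and "(\<lambda>t. vector_derivative \<gamma> (at t)) differentiable at s"
  shows "cov_deriv N \<gamma> (\<lambda>t. a *\<^sub>R vector_derivative \<gamma> (at t)) s = 0"
proof -
  let ?acc = "vector_derivative (\<lambda>t. vector_derivative \<gamma> (at t)) (at s)"
  have acc: "closest_point (tangent_space N (\<gamma> s)) ?acc = 0"
    using assms(2) unfolding tension_def tangent_proj_def .
  have "closest_point (tangent_space N (\<gamma> s)) (a *\<^sub>R ?acc) = 0"
    by (rule closest_point_cone_scaleR_eq_0[OF scaleR_in_tangent_space
          zero_in_tangent_space[OF assms(1)] acc])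
  then show ?thesis
    using assms(3) by (simp add: cov_deriv_def tangent_proj_def)
qed

lemma twisted_dirac_tensor_velocity_of_geodesic:
  assumes "\<gamma> s \<in> N" "tension N \<gamma> s = 0"
    and "(\<lambda>t. vector_derivative \<gamma> (at t)) differentiable at s"
  shows "twisted_dirac N \<gamma> (\<lambda>t. tensor z (vector_derivative \<gamma> (at t))) s = 0"
  using cov_deriv_scaleR_velocity_of_geodesic[OF assms]
  by (simp add: twisted_dirac_def tensor_def cliff_def zero_prod_def)

theorem mainTheorem3:
  fixes N :: "'e::euclidean_space set"
    and \<gamma> :: "real \<Rightarrow> 'e"
    and chi :: "real \<Rightarrow> complex"
    and \<psi> :: "real \<Rightarrow> 'e \<times> 'e"
    and \<epsilon> :: complex
  assumes N: "compact N" "smooth_submanifold N"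
    and \<gamma>: "\<forall>s. \<gamma> s \<in> N" "smooth_on UNIV \<gamma>" "\<forall>s. \<gamma> (s + 2 * pi) = \<gamma> s"
    and geodesic: "\<forall>s. tension N \<gamma> s = 0"
    and spin: "\<epsilon> = 1 \<or> \<epsilon> = -1" "\<forall>s. chi (s + 2 * pi) = \<epsilon> * chi s"
    and chi_smooth: "smooth_on UNIV chi"
    and harmonic: "\<forall>s. untwisted_dirac chi s = 0"
    and \<psi>: "\<forall>s. \<psi> s = tensor (\<i> * chi s) (vector_derivative \<gamma> (at s))"
  shows "(\<forall>s. tension N \<gamma> s = curv_term N \<gamma> \<psi> s) \<and> (\<forall>s. twisted_dirac N \<gamma> \<psi> s = 0)"
proof -
  obtain c where "\<And>s. chi s = c"
    using harmonic_spinor_constant[OF smooth_on_UNIV_differentiable[OF chi_smooth]] harmonic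
    by blast
  then have \<psi>_eq: "\<psi> = (\<lambda>t. tensor (\<i> * c) (vector_derivative \<gamma> (at t)))"
    using \<psi> by auto
  have "twisted_dirac N \<gamma> \<psi> s = 0" for s
    unfolding \<psi>_eq using \<gamma>(1) geodesic smooth_on_UNIV_vector_derivative_differentiable[OF \<gamma>(2)]
    by (intro twisted_dirac_tensor_velocity_of_geodesic) auto
  moreover have "curv_term N \<gamma> \<psi> s = 0" for s
    unfolding \<psi>_eq by (rule curv_term_tensor_eq_0)
  ultimately show ?thesis using geodesic by simp
qed

end
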